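(* Let $d$ and $k$ be positive integers with $k\le d$, and let $C_m=\frac{1}{m+1}\binom{2m}{m}$ denote the $m$-th Catalan number. Then $$\sum_{\mathcal P}C_{a_1-1}C_{a_2-1}\cdots C_{a_k-1}=\binom{2d-k-1}{d-1},$$ where the sum is over all cyclic compositions $\mathcal P$ of $d$ into $k$ parts and $a_1,\dots,a_k$ are the sizes of the parts of $\mathcal P$.
   Context: For $d\ge1$ consider the cycle graph with vertex set $\mathbb Z_d$ and the $d$ edges $\{i,i+1\}$, $i\in\mathbb Z_d$ (a loop if $d=1$, two parallel edges if $d=2$). A cyclic composition of $d$ into $k$ parts ($1\le k\le d$) is a choice of a $k$-element subset of the $d$ edges of the cycle to delete; its parts are the $k$ connected components (each a path) of the remaining graph, and the size of a part is its number of vertices. There are $\binom dk$ cyclic compositions of $d$ into $k$ parts. *)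

theory Defs
  imports Complex_Main
begin

definition catalan :: "nat \<Rightarrow> real" where
  "catalan m = real ((2*m) choose m) / real (m + 1)"

text \<open>Cycle graph on Z_d with edges e_i = {i, i+1 mod d}, i in {0..<d}.
  A cyclic composition of d into k parts is a k-subset S of the edge indices {0..<d}.
  Removing the edges in S, each deleted edge s is followed (going around the cycle)
  by exactly one part: the path of vertices s+1, s+2, ..., t (mod d), where t is the
  next deleted edge index cyclically after s (t = s if S = {s}).  Its number of
  vertices is the cyclic gap from s to t, in {1..d}.  The map s \<mapsto> (part after s) is a
  bijection from S onto the parts.\<close>
definition cyc_gap :: "nat \<Rightarrow> nat set \<Rightarrow> nat \<Rightarrow> nat" where
  "cyc_gap d S s = (LEAST j. 0 < j \<and> (s + j) mod d \<in> S)"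

definition cyclic_compositions :: "nat \<Rightarrow> nat \<Rightarrow> nat set set" where
  "cyclic_compositions d k = {S. S \<subseteq> {0..<d} \<and> card S = k}"

definition part_sizes :: "nat \<Rightarrow> nat set \<Rightarrow> nat list" where
  "part_sizes d S = map (cyc_gap d S) (sorted_list_of_set S)"

end

theory Submission
  imports Defs "HOL-Computational_Algebra.Formal_Power_Series"
begin

text \<open>
  Cut a cyclic composition \<open>S\<close> open at its largest deleted edge \<open>m = Max S\<close>.  With
  \<open>t = Min S\<close>, the part after \<open>m\<close> wraps around the cycle and has size \<open>d - m + t\<close>, and the
  other parts are the gaps between consecutive elements of \<open>S \<subseteq> {t..m}\<close>.  Let
  U(x) = sum over n \<ge> 1 of C(n-1) x^n.  Summing the Catalan weights of these gaps over all
  such \<open>S\<close> gives the coefficient of x^(m-t) in U^(k-1).  A difference g = m - t arises from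
  d - g pairs, so the whole sum is [x^d] (x U') U^(k-1) = (d/k) [x^d] U^k.  As 1 - 2U is the
  binomial series of sqrt(1 - 4x), U^2 = U - x, which gives
  [x^n] U^j = binom(2n-j-1, n-1) - binom(2n-j-1, n) by induction on j; the ballot identity
  turns d/k times this into binom(2d-k-1, d-1).
\<close>

unbundle fps_syntax

lemma catalan_Suc: "real (m + 2) * catalan (Suc m) = 2 * (2 * real m + 1) * catalan m"
proof -
  have "Suc m * (Suc (2*m + 1) choose Suc m) = Suc (2*m + 1) * ((2*m + 1) choose m)"
    by (rule Suc_times_binomial)
  then have A: "real (Suc m) * real (Suc (2*m + 1) choose Suc m) = real (Suc (2*m + 1)) * real ((2*m + 1) choose m)"
    by (metis of_nat_mult)
  have "(2*m + 1 - m) * ((2*m + 1) choose m) = (2*m + 1) * ((2*m + 1 - 1) choose m)"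
    by (rule binomial_absorb_comp)
  then have B: "real (Suc m) * real ((2*m + 1) choose m) = real (2*m + 1) * real ((2*m) choose m)"
    by (metis of_nat_mult Suc_diff_le Suc_eq_plus1 diff_add_inverse2 le_add2 mult_2)
  have "Suc (2*m + 1) = 2 * Suc m" by simp
  then have "real (Suc m) * (real (Suc m) * real (2 * Suc m choose Suc m))
      = real (Suc m) * (2 * (2 * real m + 1) * real ((2*m) choose m))"
    using A B by (simp add: algebra_simps)
  then have "real (Suc m) * real (2 * Suc m choose Suc m) = 2 * (2 * real m + 1) * real ((2*m) choose m)"
    by (subst (asm) mult_left_cancel) simp_all
  then show ?thesis
    unfolding catalan_def by (simp add: field_simps del: binomial_Suc_Suc)
qed

lemma half_gchoose_eq_catalan:
  "((1/2 :: real) gchoose Suc m) * (-4) ^ Suc m = -2 * catalan m"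
proof (induction m)
  case 0
  show ?case by (simp add: catalan_def)
next
  case (Suc m)
  let ?a = "(1/2 :: real) gchoose Suc m" and ?p = "(-4 :: real) ^ Suc m"
  have rec: "real (m + 2) * ((1/2 :: real) gchoose Suc (Suc m)) = (1/2 - real (Suc m)) * ?a"
    using gbinomial_mult_1[of "1/2 :: real" "Suc m"] by (simp add: algebra_simps)
  have "real (m + 2) * (((1/2 :: real) gchoose Suc (Suc m)) * (-4) ^ Suc (Suc m))
      = -4 * ?p * (real (m + 2) * ((1/2 :: real) gchoose Suc (Suc m)))"
    by (simp only: power_Suc[of "-4 :: real" "Suc m"] mult_ac)
  also have "\<dots> = (4 * real m + 2) * (?a * ?p)"
    unfolding rec by (simp add: algebra_simps)
  also have "\<dots> = (4 * real m + 2) * (-2 * catalan m)"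
    by (simp only: Suc.IH)
  also have "\<dots> = real (m + 2) * (-2 * catalan (Suc m))"
    using catalan_Suc[of m] by (simp add: ring_distribs)
  finally show ?case
    by (metis mult_cancel_left of_nat_eq_0_iff add_2_eq_Suc' nat.distinct(1))
qed

definition catalan_fps :: "real fps" where
  "catalan_fps = Abs_fps (\<lambda>n. if n = 0 then 0 else catalan (n - 1))"

lemma catalan_fps_nth: "catalan_fps $ n = (if n = 0 then 0 else catalan (n - 1))"
  by (simp add: catalan_fps_def)

lemma one_minus_two_catalan_fps:
  "1 - 2 * catalan_fps = Abs_fps (\<lambda>n. ((1/2 :: real) gchoose n) * (-4) ^ n)"
proof (rule fps_ext)
  fix n
  show "(1 - 2 * catalan_fps) $ n = Abs_fps (\<lambda>n. ((1/2 :: real) gchoose n) * (-4) ^ n) $ n"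
    by (cases n) (simp_all add: catalan_fps_nth half_gchoose_eq_catalan fps_numeral_fps_const del: power_Suc)
qed

lemma one_minus_two_catalan_fps_square: "(1 - 2 * catalan_fps) ^ 2 = 1 - 4 * fps_X"
proof (rule fps_ext)
  fix n
  let ?h = "fps_binomial (1/2 :: real)"
  have "((1 - 2 * catalan_fps) ^ 2) $ n = (\<Sum>i=0..n. ((1/2 :: real) gchoose i) * (-4) ^ i * (((1/2) gchoose (n - i)) * (-4) ^ (n - i)))"
    by (simp add: one_minus_two_catalan_fps power2_eq_square fps_mult_nth)
  also have "\<dots> = (-4) ^ n * (?h * ?h) $ n"
    by (simp add: fps_mult_nth sum_distrib_left algebra_simps flip: power_add)
  also have "?h * ?h = fps_binomial 1"
    by (simp flip: fps_binomial_add_mult)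
  finally show "((1 - 2 * catalan_fps) ^ 2) $ n = (1 - 4 * fps_X) $ n"
    by (cases n) (auto simp: fps_binomial_1 fps_numeral_nth fps_X_nth)
qed

lemma catalan_fps_square: "catalan_fps ^ 2 = catalan_fps - fps_X"
proof -
  have "4 * catalan_fps ^ 2 = 4 * (catalan_fps - fps_X)"
    using one_minus_two_catalan_fps_square by (simp add: power2_eq_square algebra_simps)
  then have "fps_const (1/4) * (4 * catalan_fps ^ 2) = fps_const (1/4) * (4 * (catalan_fps - fps_X))"
    by simp
  then show ?thesis
    by (simp add: fps_numeral_fps_const flip: mult.assoc fps_const_mult)
qed

lemma catalan_fps_power_nth:
  "max j 1 \<le> n \<Longrightarrow>
    (catalan_fps ^ j) $ n = real ((2*n - j - 1) choose (n - 1)) - real ((2*n - j - 1) choose n)"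
proof (induction j arbitrary: n rule: induct_nat_012)
  case 0
  then obtain p where n: "n = Suc p" by (cases n) auto
  have "(2*p + 1) choose p = (2*p + 1) choose Suc p"
    using binomial_symmetric[of p "2*p + 1"] by (simp add: Suc_diff_le)
  then show ?case
    by (simp add: n)
next
  case 1
  then obtain m where n: "n = Suc m" by (cases n) auto
  have "real (Suc m) * real ((2*m) choose Suc m) = real m * real ((2*m) choose m)"
    using binomial_absorption[of m "2*m"] binomial_absorb_comp[of "2*m" m]
    by (metis diff_add_inverse mult_2 of_nat_mult)
  then show ?case
    by (simp add: n catalan_fps_nth catalan_def field_simps del: binomial_Suc_Suc)
next
  case (ge2 j)
  obtain r where n: "n = Suc (Suc (j + r))" using ge2.prems by (intro that[of "n - j - 2"]) simp
  define N where "N = j + 2*r + 1"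
  have "catalan_fps ^ Suc (Suc j) = catalan_fps ^ j * catalan_fps ^ 2"
    by (simp add: power2_eq_square mult_ac)
  also have "\<dots> = catalan_fps ^ Suc j - fps_X * catalan_fps ^ j"
    by (simp add: catalan_fps_square algebra_simps)
  finally have "(catalan_fps ^ Suc (Suc j)) $ n = (catalan_fps ^ Suc j) $ n - (catalan_fps ^ j) $ Suc (j + r)"
    by (simp add: n)
  also have "(catalan_fps ^ Suc j) $ n = real (Suc N choose Suc (j + r)) - real (Suc N choose n)"
    using ge2.IH(2)[of n] by (simp add: n N_def)
  also have "(catalan_fps ^ j) $ Suc (j + r) = real (N choose (j + r)) - real (N choose Suc (j + r))"
    using ge2.IH(1)[of "Suc (j + r)"] by (simp add: N_def)
  also have "real (Suc N choose Suc (j + r)) - real (Suc N choose n) - (real (N choose (j + r)) - real (N choose Suc (j + r)))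
      = real (N choose Suc (j + r)) - real (N choose n)"
    unfolding n binomial_Suc_Suc of_nat_add by simp
  finally show ?case
    by (simp add: n N_def)
qed

definition next_in :: "nat set \<Rightarrow> nat \<Rightarrow> nat" where
  "next_in T s = (LEAST x. x \<in> T \<and> s < x)"

definition spanning_subsets :: "nat \<Rightarrow> nat \<Rightarrow> nat \<Rightarrow> nat set set" where
  "spanning_subsets a b j = {T. T \<subseteq> {a..b} \<and> a \<in> T \<and> b \<in> T \<and> card T = Suc j}"

definition gap_weight :: "nat set \<Rightarrow> nat \<Rightarrow> real" where
  "gap_weight T b = (\<Prod>s\<in>T - {b}. catalan (next_in T s - s - 1))"

lemma next_in_eqI:
  "x \<in> T \<Longrightarrow> s < x \<Longrightarrow> (\<And>y. y \<in> T \<Longrightarrow> s < y \<Longrightarrow> x \<le> y) \<Longrightarrow> next_in T s = x"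
  unfolding next_in_def by (rule Least_equality) auto

lemma next_in_cong: "(\<And>x. s < x \<Longrightarrow> x \<in> A \<longleftrightarrow> x \<in> B) \<Longrightarrow> next_in A s = next_in B s"
  unfolding next_in_def by metis

lemma next_in_mem:
  assumes "finite T" "s \<in> T" "s < Max T"
  shows "next_in T s \<in> T" "s < next_in T s" "\<And>y. y \<in> T \<Longrightarrow> s < y \<Longrightarrow> next_in T s \<le> y"
proof -
  have "\<exists>x. x \<in> T \<and> s < x"
    using assms Max_in by blast
  then show "next_in T s \<in> T" "s < next_in T s"
    unfolding next_in_def by (metis (mono_tags, lifting) LeastI_ex)+
  show "\<And>y. y \<in> T \<Longrightarrow> s < y \<Longrightarrow> next_in T s \<le> y"
    unfolding next_in_def by (simp add: Least_le)
qed

lemma finite_spanning_subsets: "finite (spanning_subsets a b j)"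
  by (rule finite_subset[of _ "Pow {a..b}"]) (auto simp: spanning_subsets_def)

lemma spanning_subsets_0: "spanning_subsets a b 0 = (if a = b then {{a}} else {})"
proof -
  have "T \<in> spanning_subsets a b 0 \<longleftrightarrow> T = {a} \<and> a = b" for T
    unfolding spanning_subsets_def card_1_singleton_iff by auto
  then show ?thesis
    by auto
qed

lemma spanning_subsets_same_Suc: "spanning_subsets a a (Suc j) = {}"
proof (rule ccontr)
  assume "spanning_subsets a a (Suc j) \<noteq> {}"
  then obtain T where "T \<subseteq> {a}" "card T = Suc (Suc j)"
    unfolding spanning_subsets_def by auto
  then show False
    using card_mono[of "{a}" T] by simp
qed

lemma gap_weight_insert:
  assumes T: "T \<in> spanning_subsets a' b j" and "a < a'"
  shows "gap_weight (insert a T) b = catalan (a' - a - 1) * gap_weight T b"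
proof -
  have sub: "T \<subseteq> {a'..b}" and "a' \<in> T" "b \<in> T"
    using T unfolding spanning_subsets_def by auto
  then have "finite T" "a \<notin> T" "a \<noteq> b"
    using \<open>a < a'\<close> finite_subset by fastforce+
  then have "gap_weight (insert a T) b
      = catalan (next_in (insert a T) a - a - 1) * (\<Prod>s\<in>T - {b}. catalan (next_in (insert a T) s - s - 1))"
    unfolding gap_weight_def by (simp add: insert_Diff_if)
  also have "next_in (insert a T) a = a'"
    using \<open>a' \<in> T\<close> \<open>a < a'\<close> sub by (intro next_in_eqI) auto
  also have "(\<Prod>s\<in>T - {b}. catalan (next_in (insert a T) s - s - 1)) = gap_weight T b"
    unfolding gap_weight_def
    by (intro prod.cong refl arg_cong[where f = catalan] arg_cong2[where f = minus] next_in_cong)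
       (use sub \<open>a < a'\<close> in auto)
  finally show ?thesis .
qed

lemma bij_betw_insert_spanning_subsets:
  assumes "a < b"
  shows "bij_betw (\<lambda>(a', T). insert a T)
           (SIGMA a':{a<..b}. spanning_subsets a' b j) (spanning_subsets a b (Suc j))"
proof -
  have split: "(Min (T - {a}), T - {a}) \<in> (SIGMA a':{a<..b}. spanning_subsets a' b j)"
    if T: "T \<in> spanning_subsets a b (Suc j)" for T
  proof -
    have sub: "T \<subseteq> {a..b}" and "a \<in> T" "b \<in> T" and c: "card T = Suc (Suc j)"
      using T unfolding spanning_subsets_def by auto
    then have fin: "finite (T - {a})" and ne: "T - {a} \<noteq> {}"
      using finite_subset assms by auto
    let ?m = "Min (T - {a})"
    have m: "?m \<in> T - {a}"
      by (rule Min_in[OF fin ne])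
    then have "a < ?m" "?m \<le> b"
      using sub \<open>b \<in> T\<close> assms Min_le[OF fin, of b] by auto
    moreover have "T - {a} \<subseteq> {?m..b}"
      using sub Min_le[OF fin] by (auto simp: subset_iff)
    moreover have "card (T - {a}) = Suc j"
      using c \<open>a \<in> T\<close> by simp
    ultimately show ?thesis
      using m \<open>b \<in> T\<close> assms unfolding spanning_subsets_def by auto
  qed
  have join: "insert a T \<in> spanning_subsets a b (Suc j)" "Min T = a'" "a \<notin> T"
    if "a < a'" and T: "T \<in> spanning_subsets a' b j" for a' T
  proof -
    have sub: "T \<subseteq> {a'..b}" and "a' \<in> T" "b \<in> T" "card T = Suc j"
      using T unfolding spanning_subsets_def by auto
    moreover have "finite T"
      using finite_subset[OF sub] by simp
    moreover show "a \<notin> T"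
      using sub \<open>a < a'\<close> by auto
    ultimately show "Min T = a'"
      by (intro Min_eqI) auto
    have "insert a T \<subseteq> {a..b}"
      using sub \<open>a < a'\<close> assms by auto
    then show "insert a T \<in> spanning_subsets a b (Suc j)"
      using \<open>finite T\<close> \<open>a \<notin> T\<close> \<open>b \<in> T\<close> \<open>card T = Suc j\<close>
      unfolding spanning_subsets_def by simp
  qed
  show ?thesis
  proof (rule bij_betw_byWitness[where f' = "\<lambda>T. (Min (T - {a}), T - {a})"])
    show "\<forall>p\<in>(SIGMA a':{a<..b}. spanning_subsets a' b j). (\<lambda>T. (Min (T - {a}), T - {a})) ((\<lambda>(a', T). insert a T) p) = p"
      using join(2,3) by auto
    show "\<forall>T\<in>spanning_subsets a b (Suc j). (\<lambda>(a', T). insert a T) (Min (T - {a}), T - {a}) = T"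
      by (auto simp: spanning_subsets_def)
    show "(\<lambda>(a', T). insert a T) ` (SIGMA a':{a<..b}. spanning_subsets a' b j) \<subseteq> spanning_subsets a b (Suc j)"
      using join(1) by auto
    show "(\<lambda>T. (Min (T - {a}), T - {a})) ` spanning_subsets a b (Suc j) \<subseteq> (SIGMA a':{a<..b}. spanning_subsets a' b j)"
      using split by blast
  qed
qed

lemma sum_gap_weight_spanning_subsets_Suc:
  assumes "a < b"
  shows "(\<Sum>T\<in>spanning_subsets a b (Suc j). gap_weight T b)
       = (\<Sum>a'\<in>{a<..b}. catalan (a' - a - 1) * (\<Sum>T\<in>spanning_subsets a' b j. gap_weight T b))"
proof -
  have "(\<Sum>T\<in>spanning_subsets a b (Suc j). gap_weight T b)
      = (\<Sum>(a', T)\<in>(SIGMA a':{a<..b}. spanning_subsets a' b j). gap_weight (insert a T) b)"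
    using sum.reindex_bij_betw[OF bij_betw_insert_spanning_subsets[OF assms], of "\<lambda>T. gap_weight T b"]
    by (simp add: case_prod_unfold)
  also have "\<dots> = (\<Sum>a'\<in>{a<..b}. \<Sum>T\<in>spanning_subsets a' b j. gap_weight (insert a T) b)"
    by (rule sum.Sigma[symmetric]) (simp_all add: finite_spanning_subsets)
  also have "\<dots> = (\<Sum>a'\<in>{a<..b}. \<Sum>T\<in>spanning_subsets a' b j. catalan (a' - a - 1) * gap_weight T b)"
    by (intro sum.cong refl gap_weight_insert) auto
  finally show ?thesis
    by (simp only: sum_distrib_left)
qed

lemma sum_gap_weight_spanning_subsets:
  "a \<le> b \<Longrightarrow> (\<Sum>T\<in>spanning_subsets a b j. gap_weight T b) = (catalan_fps ^ j) $ (b - a)"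
proof (induction j arbitrary: a)
  case 0
  then show ?case
    by (simp add: spanning_subsets_0 gap_weight_def)
next
  case (Suc j)
  show ?case
  proof (cases "a = b")
    case True
    then show ?thesis
      by (simp add: spanning_subsets_same_Suc fps_mult_nth catalan_fps_nth)
  next
    case False
    then obtain e where b: "b = a + Suc e"
      using Suc.prems by (metis add_Suc_right le_eq_less_or_eq less_imp_Suc_add)
    have "(\<Sum>T\<in>spanning_subsets a b (Suc j). gap_weight T b)
        = (\<Sum>a'\<in>{Suc a..b}. catalan (a' - a - 1) * (catalan_fps ^ j) $ (b - a'))"
      using Suc.IH by (simp add: sum_gap_weight_spanning_subsets_Suc b atLeastSucAtMost_greaterThanAtMost)
    also have "\<dots> = (\<Sum>i = 1..Suc e. catalan (i + a - a - 1) * (catalan_fps ^ j) $ (b - (i + a)))"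
    proof -
      have "{Suc a..b} = {1 + a..Suc e + a}"
        by (simp add: b)
      then show ?thesis
        by (simp only: sum.shift_bounds_cl_nat_ivl)
    qed
    also have "\<dots> = (\<Sum>i = 1..Suc e. catalan_fps $ i * (catalan_fps ^ j) $ (Suc e - i))"
      by (intro sum.cong) (auto simp: b catalan_fps_nth)
    also have "\<dots> = (catalan_fps ^ Suc j) $ (b - a)"
      by (simp add: b fps_mult_nth sum.atLeast_Suc_atMost[of 0] catalan_fps_nth)
    finally show ?thesis .
  qed
qed

lemma cyc_gap_less_Max:
  assumes S: "S \<subseteq> {0..<d}" and "s \<in> S" "s < Max S"
  shows "cyc_gap d S s = next_in S s - s"
proof -
  have fin: "finite S"
    using S finite_subset by blast
  note nxt = next_in_mem[OF fin \<open>s \<in> S\<close> \<open>s < Max S\<close>]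
  have "next_in S s < d"
    using nxt(1) S by auto
  show ?thesis
    unfolding cyc_gap_def
  proof (rule Least_equality)
    show "0 < next_in S s - s \<and> (s + (next_in S s - s)) mod d \<in> S"
      using nxt(1,2) \<open>next_in S s < d\<close> by simp
  next
    fix y assume y: "0 < y \<and> (s + y) mod d \<in> S"
    show "next_in S s - s \<le> y"
    proof (rule ccontr)
      assume "\<not> next_in S s - s \<le> y"
      then have "s + y < next_in S s" and "s + y \<in> S"
        using y \<open>next_in S s < d\<close> by simp_all
      then show False
        using nxt(3)[of "s + y"] y by simp
    qed
  qed
qed

lemma cyc_gap_Max:
  assumes S: "S \<subseteq> {0..<d}" and "S \<noteq> {}"
  shows "cyc_gap d S (Max S) = d - Max S + Min S"
proof -
  have fin: "finite S"
    using S finite_subset by blast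
  have "Max S \<in> S" "Min S \<in> S" "Min S \<le> Max S"
    using fin \<open>S \<noteq> {}\<close> by auto
  then have "Max S < d"
    using S by auto
  show ?thesis
    unfolding cyc_gap_def
  proof (rule Least_equality)
    have "Max S + (d - Max S + Min S) = d + Min S"
      using \<open>Max S < d\<close> by simp
    then show "0 < d - Max S + Min S \<and> (Max S + (d - Max S + Min S)) mod d \<in> S"
      using \<open>Max S < d\<close> \<open>Min S \<in> S\<close> \<open>Min S \<le> Max S\<close> by simp
  next
    fix y assume y: "0 < y \<and> (Max S + y) mod d \<in> S"
    show "d - Max S + Min S \<le> y"
    proof (rule ccontr)
      assume "\<not> d - Max S + Min S \<le> y"
      then have y_less: "Max S + y < d + Min S"
        using \<open>Max S < d\<close> by linarith
      show False
      proof (cases "Max S + y < d")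
        case True
        then have "Max S + y \<in> S"
          using y by simp
        then show False
          using Max_ge[OF fin, of "Max S + y"] y by simp
      next
        case False
        then have "(Max S + y) mod d = Max S + y - d"
          using y_less \<open>Min S \<le> Max S\<close> \<open>Max S < d\<close> by (simp add: mod_if)
        then have "Max S + y - d \<in> S"
          using y by simp
        then show False
          using Min_le[OF fin, of "Max S + y - d"] y_less False by simp
      qed
    qed
  qed
qed

lemma prod_catalan_part_sizes:
  assumes S: "S \<subseteq> {0..<d}" and "S \<noteq> {}"
  shows "(\<Prod>a\<leftarrow>part_sizes d S. catalan (a - 1))
       = catalan (d - Max S + Min S - 1) * gap_weight S (Max S)"
proof -
  have fin: "finite S"
    using S finite_subset by blast
  have "(\<Prod>a\<leftarrow>part_sizes d S. catalan (a - 1)) = (\<Prod>s\<in>S. catalan (cyc_gap d S s - 1))"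
    using fin by (simp add: part_sizes_def comp_def prod.distinct_set_conv_list[symmetric])
  also have "\<dots> = catalan (cyc_gap d S (Max S) - 1) * (\<Prod>s\<in>S - {Max S}. catalan (cyc_gap d S s - 1))"
    using fin \<open>S \<noteq> {}\<close> by (intro prod.remove) auto
  also have "(\<Prod>s\<in>S - {Max S}. catalan (cyc_gap d S s - 1)) = gap_weight S (Max S)"
    unfolding gap_weight_def
  proof (rule prod.cong)
    fix s assume s: "s \<in> S - {Max S}"
    then have "s < Max S"
      using fin by (simp add: order.not_eq_order_implies_strict)
    then show "catalan (cyc_gap d S s - 1) = catalan (next_in S s - s - 1)"
      using cyc_gap_less_Max[OF S] s by simp
  qed simp
  finally show ?thesis
    using cyc_gap_Max[OF assms] by simp
qed

lemma cyclic_compositions_Max_Min: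
  assumes "m < d" "t \<le> m" "1 \<le> k"
  shows "{S \<in> cyclic_compositions d k. Max S = m \<and> Min S = t} = spanning_subsets t m (k - 1)"
proof (intro set_eqI iffI)
  fix S assume "S \<in> {S \<in> cyclic_compositions d k. Max S = m \<and> Min S = t}"
  then have S: "S \<subseteq> {0..<d}" "card S = k" "Max S = m" "Min S = t"
    unfolding cyclic_compositions_def by auto
  then have fin: "finite S" and "S \<noteq> {}"
    using finite_subset \<open>1 \<le> k\<close> by auto
  then have "m \<in> S" "t \<in> S" "S \<subseteq> {t..m}"
    using S(3,4) Max_in[OF fin \<open>S \<noteq> {}\<close>] Min_in[OF fin \<open>S \<noteq> {}\<close>] Min_le[OF fin] Max_ge[OF fin]
    by auto
  then show "S \<in> spanning_subsets t m (k - 1)"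
    using S(2) \<open>1 \<le> k\<close> unfolding spanning_subsets_def by simp
next
  fix S assume "S \<in> spanning_subsets t m (k - 1)"
  then have S: "S \<subseteq> {t..m}" "t \<in> S" "m \<in> S" "card S = k"
    unfolding spanning_subsets_def using \<open>1 \<le> k\<close> by auto
  then have "finite S"
    using finite_subset by blast
  have "Max S = m" "Min S = t"
    using \<open>finite S\<close> S by (intro Max_eqI Min_eqI; auto)+
  then show "S \<in> {S \<in> cyclic_compositions d k. Max S = m \<and> Min S = t}"
    using S \<open>m < d\<close> unfolding cyclic_compositions_def by auto
qed

lemma sum_catalan_part_sizes_Max_Min:
  assumes "m < d" "t \<le> m" "1 \<le> k"
  shows "(\<Sum>S | S \<in> cyclic_compositions d k \<and> Max S = m \<and> Min S = t. \<Prod>a\<leftarrow>part_sizes d S. catalan (a - 1))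
       = catalan (d - (m - t) - 1) * (catalan_fps ^ (k - 1)) $ (m - t)"
proof -
  have "(\<Sum>S | S \<in> cyclic_compositions d k \<and> Max S = m \<and> Min S = t. \<Prod>a\<leftarrow>part_sizes d S. catalan (a - 1))
      = (\<Sum>S\<in>spanning_subsets t m (k - 1). \<Prod>a\<leftarrow>part_sizes d S. catalan (a - 1))"
    using cyclic_compositions_Max_Min[OF assms] by simp
  also have "\<dots> = (\<Sum>S\<in>spanning_subsets t m (k - 1). catalan (d - (m - t) - 1) * gap_weight S m)"
  proof (rule sum.cong)
    fix S assume "S \<in> spanning_subsets t m (k - 1)"
    then have "S \<in> cyclic_compositions d k" "Max S = m" "Min S = t"
      using cyclic_compositions_Max_Min[OF assms] by blast+
    then have "S \<subseteq> {0..<d}" "S \<noteq> {}"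
      using \<open>1 \<le> k\<close> unfolding cyclic_compositions_def by auto
    then show "(\<Prod>a\<leftarrow>part_sizes d S. catalan (a - 1)) = catalan (d - (m - t) - 1) * gap_weight S m"
      using prod_catalan_part_sizes \<open>Max S = m\<close> \<open>Min S = t\<close> \<open>t \<le> m\<close> \<open>m < d\<close> by simp
  qed simp
  also have "\<dots> = catalan (d - (m - t) - 1) * (catalan_fps ^ (k - 1)) $ (m - t)"
    using sum_gap_weight_spanning_subsets[OF \<open>t \<le> m\<close>] by (simp flip: sum_distrib_left)
  finally show ?thesis .
qed

lemma sum_catalan_part_sizes_eq:
  assumes "1 \<le> k"
  shows "(\<Sum>S\<in>cyclic_compositions d k. \<Prod>a\<leftarrow>part_sizes d S. catalan (a - 1))
       = (\<Sum>m<d. \<Sum>t\<le>m. catalan (d - (m - t) - 1) * (catalan_fps ^ (k - 1)) $ (m - t))"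
proof -
  let ?C = "cyclic_compositions d k" and ?P = "Sigma {..<d} (\<lambda>m. {..m})"
  have "finite ?C"
    by (rule finite_subset[of _ "Pow {0..<d}"]) (auto simp: cyclic_compositions_def)
  moreover have "(\<lambda>S. (Max S, Min S)) ` ?C \<subseteq> ?P"
  proof (rule image_subsetI)
    fix S assume "S \<in> ?C"
    then have "S \<subseteq> {0..<d}" "finite S" "S \<noteq> {}"
      using \<open>1 \<le> k\<close> finite_subset unfolding cyclic_compositions_def by auto
    then show "(Max S, Min S) \<in> ?P"
      using Max_in[of S] by fastforce
  qed
  ultimately have "(\<Sum>S\<in>?C. \<Prod>a\<leftarrow>part_sizes d S. catalan (a - 1))
      = (\<Sum>p\<in>?P. \<Sum>S\<in>{S \<in> ?C. (Max S, Min S) = p}. \<Prod>a\<leftarrow>part_sizes d S. catalan (a - 1))"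
    by (intro sum.group[symmetric]) auto
  also have "\<dots> = (\<Sum>(m, t)\<in>?P. catalan (d - (m - t) - 1) * (catalan_fps ^ (k - 1)) $ (m - t))"
    using sum_catalan_part_sizes_Max_Min \<open>1 \<le> k\<close> by (intro sum.cong) auto
  also have "\<dots> = (\<Sum>m<d. \<Sum>t\<le>m. catalan (d - (m - t) - 1) * (catalan_fps ^ (k - 1)) $ (m - t))"
    by (rule sum.Sigma[symmetric]) auto
  finally show ?thesis .
qed

lemma sum_triangle_diff:
  fixes f :: "nat \<Rightarrow> 'a::comm_semiring_1"
  shows "(\<Sum>m<d. \<Sum>t\<le>m. f (m - t)) = (\<Sum>i=0..d. of_nat i * f (d - i))"
proof (induction d)
  case 0
  then show ?case by simp
next
  case (Suc d)
  have "(\<Sum>i=0..Suc d. of_nat i * f (Suc d - i)) = (\<Sum>i=0..d. of_nat (Suc i) * f (d - i))"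
    by (subst sum.atLeast0_atMost_Suc_shift) simp
  also have "\<dots> = (\<Sum>i=0..d. of_nat i * f (d - i) + f (d - i))"
    by (simp add: algebra_simps)
  also have "\<dots> = (\<Sum>i=0..d. of_nat i * f (d - i)) + (\<Sum>t\<le>d. f (d - t))"
    by (simp add: sum.distrib atMost_atLeast0)
  finally show ?case
    using Suc.IH by simp
qed

lemma fps_X_mult_deriv_nth: "(fps_X * fps_deriv f) $ n = of_nat n * f $ n"
  by (cases n) simp_all

lemma fps_power_nth_deriv:
  fixes F :: "'a::comm_semiring_1 fps"
  shows "of_nat n * (F ^ k) $ n = of_nat k * (\<Sum>i=0..n. of_nat i * F $ i * (F ^ (k - 1)) $ (n - i))"
proof -
  have "of_nat n * (F ^ k) $ n = (fps_X * fps_deriv (F ^ k)) $ n"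
    by (simp only: fps_X_mult_deriv_nth)
  also have "fps_X * fps_deriv (F ^ k) = fps_const (of_nat k) * ((fps_X * fps_deriv F) * F ^ (k - 1))"
    by (simp add: fps_deriv_power mult_ac)
  also have "(fps_const (of_nat k) * ((fps_X * fps_deriv F) * F ^ (k - 1))) $ n
      = of_nat k * (\<Sum>i=0..n. (fps_X * fps_deriv F) $ i * (F ^ (k - 1)) $ (n - i))"
    by (simp only: fps_mult_left_const_nth fps_mult_nth[of "fps_X * fps_deriv F"])
  finally show ?thesis
    by (simp only: fps_X_mult_deriv_nth mult.assoc)
qed

lemma binomial_ballot:
  assumes "1 \<le> k" "k \<le> d"
  shows "real d * (real ((2*d - k - 1) choose (d - 1)) - real ((2*d - k - 1) choose d))
       = real k * real ((2*d - k - 1) choose (d - 1))"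
proof -
  obtain e where d: "d = Suc e"
    using assms by (cases d) auto
  define N where "N = 2*d - k - 1"
  have "Suc e * (N choose Suc e) = (N - e) * (N choose e)"
    using binomial_absorption[of e N] binomial_absorb_comp[of N e] by simp
  moreover have "real (N - e) = real d - real k"
    using assms unfolding N_def d by auto
  ultimately have "real d * real (N choose d) = (real d - real k) * real (N choose e)"
    unfolding d by (metis of_nat_mult)
  then show ?thesis
    unfolding N_def[symmetric] by (simp add: d algebra_simps)
qed

theorem lemma3p4:
  fixes d k :: nat
  assumes "1 \<le> k" and "k \<le> d"
  shows "(\<Sum>S\<in>cyclic_compositions d k. \<Prod>a\<leftarrow>part_sizes d S. catalan (a - 1))
         = real ((2*d - k - 1) choose (d - 1))"
proof -
  let ?U = catalan_fps
  have "(\<Sum>S\<in>cyclic_compositions d k. \<Prod>a\<leftarrow>part_sizes d S. catalan (a - 1))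
      = (\<Sum>m<d. \<Sum>t\<le>m. catalan (d - (m - t) - 1) * (?U ^ (k - 1)) $ (m - t))"
    by (rule sum_catalan_part_sizes_eq[OF \<open>1 \<le> k\<close>])
  also have "\<dots> = (\<Sum>i=0..d. real i * (catalan (d - (d - i) - 1) * (?U ^ (k - 1)) $ (d - i)))"
    by (rule sum_triangle_diff)
  also have "\<dots> = (\<Sum>i=0..d. real i * ?U $ i * (?U ^ (k - 1)) $ (d - i))"
    by (intro sum.cong) (auto simp: catalan_fps_nth)
  also have "\<dots> = real d * (?U ^ k) $ d / real k"
    using fps_power_nth_deriv[of d ?U k] \<open>1 \<le> k\<close> by simp
  also have "\<dots> = real ((2*d - k - 1) choose (d - 1))"
    using catalan_fps_power_nth[of k d] binomial_ballot[OF assms] assms by simp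
  finally show ?thesis .
qed

end
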